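(* (i) If an entanglement witness $W$ on $\mathbb{C}^m\otimes\mathbb{C}^n$ can be locally projected to an entanglement witness supported on $\mathbb{C}^2\otimes\mathbb{C}^n$, then it can be further locally projected to an entanglement witness supported on $\mathbb{C}^2\otimes\mathbb{C}^2$. (ii) If $\rho_{AB}$ is a $1$-undistillable NPT state on $\mathbb{C}^m\otimes\mathbb{C}^n$, then $\rho_{AB}^\Gamma$ (which is an entanglement witness) cannot be locally projected to an entanglement witness supported on $\mathbb{C}^2\otimes\mathbb{C}^n$. (iii) If an entanglement witness can be locally projected to a non-decomposable entanglement witness that detects some PPT entangled state, then the original entanglement witness is itself non-decomposable.
   Context: An entanglement witness (EW) is a Hermitian matrix $W$ with $\mathrm{tr}(W\sigma)\ge0$ for all separable states $\sigma$ and $\mathrm{tr}(W\sigma)<0$ for some entangled state; it detects $\rho$ if $\mathrm{tr}(W\rho)<0$. A Hermitian matrix $W$ on $\mathbb{C}^m\otimes\mathbb{C}^n$ is locally projected to $W'=(U\otimes V)W(U\otimes V)^\dagger$ supported on $\mathbb{C}^p\otimes\mathbb{C}^q$ for matrices $U\in\mathcal{M}_{p,m}(\mathbb{C})$, $V\in\mathcal{M}_{q,n}(\mathbb{C})$. $M^\Gamma$ is the partial transpose with respect to the first subsystem; PPT/NPT means $\rho^\Gamma$ is / is not positive semidefinite. A state $\rho$ on $\mathbb{C}^m\otimes\mathbb{C}^n$ is $1$-undistillable if $(U\otimes V)\rho(U\otimes V)^\dagger$ is PPT for every $U\in\mathcal{M}_{2,m}(\mathbb{C})$ and every $V\in\mathcal{M}_{n}(\mathbb{C})$.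 A Hermitian $W$ is decomposable if $W=X^\Gamma+Y$ with $X,Y$ positive semidefinite. *)

theory Defs
  imports Complex_Main "Jordan_Normal_Form.Matrix"
begin

text \<open>A vector space C^m (x) C^n is modelled by index set {0..<m*n}, with the
  basis vector e_a (x) e_b at index a*n+b (standard Kronecker ordering).\<close>

definition adj :: "complex mat \<Rightarrow> complex mat" where
  "adj A = mat (dim_col A) (dim_row A) (\<lambda>(i,j). cnj (A $$ (j,i)))"

definition kron :: "complex mat \<Rightarrow> complex mat \<Rightarrow> complex mat" where
  "kron A B = mat (dim_row A * dim_row B) (dim_col A * dim_col B)
     (\<lambda>(i,j). A $$ (i div dim_row B, j div dim_col B) * B $$ (i mod dim_row B, j mod dim_col B))"

definition mtrace :: "complex mat \<Rightarrow> complex" where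
  "mtrace A = (\<Sum>i<dim_row A. A $$ (i,i))"

definition hermitian :: "complex mat \<Rightarrow> bool" where
  "hermitian A \<longleftrightarrow> A = adj A"

definition psd :: "nat \<Rightarrow> complex mat \<Rightarrow> bool" where
  "psd d M \<longleftrightarrow> M \<in> carrier_mat d d \<and>
     (\<forall>v \<in> carrier_vec d.
        let z = (\<Sum>i<d. \<Sum>j<d. cnj (v $ i) * M $$ (i,j) * v $ j) in Im z = 0 \<and> 0 \<le> Re z)"

definition state :: "nat \<Rightarrow> complex mat \<Rightarrow> bool" where
  "state d \<rho> \<longleftrightarrow> psd d \<rho> \<and> mtrace \<rho> = 1"

definition separable :: "nat \<Rightarrow> nat \<Rightarrow> complex mat \<Rightarrow> bool" where
  "separable m n \<sigma> \<longleftrightarrow> (\<exists>(K::nat) (p::nat \<Rightarrow> real) A B.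
      (\<forall>k<K. 0 \<le> p k \<and> state m (A k) \<and> state n (B k)) \<and> (\<Sum>k<K. p k) = 1 \<and>
      \<sigma> = mat (m*n) (m*n) (\<lambda>(i,j). \<Sum>k<K. complex_of_real (p k) * kron (A k) (B k) $$ (i,j)))"

definition entangled :: "nat \<Rightarrow> nat \<Rightarrow> complex mat \<Rightarrow> bool" where
  "entangled m n \<rho> \<longleftrightarrow> state (m*n) \<rho> \<and> \<not> separable m n \<rho>"

text \<open>W detects rho if tr(W rho) < 0 (the trace is real for Hermitian W, rho).\<close>
definition detects :: "complex mat \<Rightarrow> complex mat \<Rightarrow> bool" where
  "detects W \<rho> \<longleftrightarrow> Re (mtrace (W * \<rho>)) < 0"

definition EW :: "nat \<Rightarrow> nat \<Rightarrow> complex mat \<Rightarrow> bool" where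
  "EW m n W \<longleftrightarrow> W \<in> carrier_mat (m*n) (m*n) \<and> hermitian W \<and>
     (\<forall>\<sigma>. separable m n \<sigma> \<longrightarrow> 0 \<le> Re (mtrace (W * \<sigma>))) \<and>
     (\<exists>\<rho>. entangled m n \<rho> \<and> detects W \<rho>)"

definition lproj :: "complex mat \<Rightarrow> complex mat \<Rightarrow> complex mat \<Rightarrow> complex mat" where
  "lproj U V W = kron U V * W * adj (kron U V)"

text \<open>Partial transpose w.r.t. the first factor of C^m (x) C^n.\<close>
definition ptrans :: "nat \<Rightarrow> nat \<Rightarrow> complex mat \<Rightarrow> complex mat" where
  "ptrans m n M = mat (m*n) (m*n)
     (\<lambda>(i,j). M $$ ((j div n) * n + i mod n, (i div n) * n + j mod n))"

definition PPT :: "nat \<Rightarrow> nat \<Rightarrow> complex mat \<Rightarrow> bool" where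
  "PPT m n \<rho> \<longleftrightarrow> psd (m*n) (ptrans m n \<rho>)"

definition one_undistillable :: "nat \<Rightarrow> nat \<Rightarrow> complex mat \<Rightarrow> bool" where
  "one_undistillable m n \<rho> \<longleftrightarrow>
     (\<forall>U \<in> carrier_mat 2 m. \<forall>V \<in> carrier_mat n n. PPT 2 n (lproj U V \<rho>))"

definition decomposable :: "nat \<Rightarrow> nat \<Rightarrow> complex mat \<Rightarrow> bool" where
  "decomposable m n W \<longleftrightarrow> (\<exists>X Y. psd (m*n) X \<and> psd (m*n) Y \<and> W = ptrans m n X + Y)"

end

theory Submission
  imports Defs
begin

text \<open>
  An entanglement witness is exactly a Hermitian matrix whose quadratic form is nonnegative on
  product vectors a (x) b (block positivity) and negative somewhere: separable states are
  mixtures of projections onto product vectors, and a negative vector normalises to a detected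
  pure state. A local projection W' = K W K^dagger with K = U (x) V has quadratic form
  v |-> <K^dagger v, W K^dagger v>, and K^dagger sends product vectors to product vectors, so
  block positivity survives every local projection.

  (i) A negative vector of a witness on C^2 (x) C^n has the form e_0 (x) f_0 + e_1 (x) f_1.
  Projecting the second factor with the matrix V whose rows are the conjugates of f_0 and f_1
  gives a block-positive 2 x 2 matrix which is negative on e_0 (x) e_0 + e_1 (x) e_1.

  (ii) The quadratic form of rho^Gamma at a (x) b is that of rho at conj a (x) b, so rho^Gamma is
  block positive; it is not positive since rho is NPT. Local projection commutes with partial
  transposition once U is replaced by its entrywise conjugate, so 1-undistillability makes every
  projection of rho^Gamma onto C^2 (x) C^n positive semidefinite, hence not a witness.

  (iii) By the same commutation a decomposition W = X^Gamma + Y is carried to a decomposition of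
  any local projection of W.
\<close>

lemma sum_lessThan_mult:
  "(\<Sum>i<m*n. f i) = (\<Sum>a<m. \<Sum>b<n. (f (a*n+b) :: 'a::comm_monoid_add))" for m n :: nat
proof -
  have "(\<Sum>i<m*n. f i) = (\<Sum>a<m. sum f {a*n..<a*n+n})"
    by (rule sum.nat_group[symmetric])
  also have "\<dots> = (\<Sum>a<m. \<Sum>b<n. f (a*n+b))"
    by (rule sum.cong[OF refl])
      (simp add: sum.atLeastLessThan_shift_0[of _ "x*n" for x] atLeast0LessThan comp_def)
  finally show ?thesis .
qed

lemma sum_swap_pairs:
  "(\<Sum>i\<in>A. \<Sum>j\<in>B. \<Sum>k\<in>C. \<Sum>l\<in>D. F i j k l)
   = (\<Sum>k\<in>C. \<Sum>l\<in>D. \<Sum>i\<in>A. \<Sum>j\<in>B. F i j k l)"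
proof -
  have "(\<Sum>i\<in>A. \<Sum>j\<in>B. \<Sum>k\<in>C. \<Sum>l\<in>D. F i j k l)
      = (\<Sum>i\<in>A. \<Sum>k\<in>C. \<Sum>j\<in>B. \<Sum>l\<in>D. F i j k l)"
    by (rule sum.cong[OF refl], rule sum.swap)
  also have "\<dots> = (\<Sum>k\<in>C. \<Sum>i\<in>A. \<Sum>j\<in>B. \<Sum>l\<in>D. F i j k l)"
    by (rule sum.swap)
  also have "\<dots> = (\<Sum>k\<in>C. \<Sum>i\<in>A. \<Sum>l\<in>D. \<Sum>j\<in>B. F i j k l)"
    by (rule sum.cong[OF refl], rule sum.cong[OF refl], rule sum.swap)
  also have "\<dots> = (\<Sum>k\<in>C. \<Sum>l\<in>D. \<Sum>i\<in>A. \<Sum>j\<in>B. F i j k l)"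
    by (rule sum.cong[OF refl], rule sum.swap)
  finally show ?thesis .
qed

lemma sum4_swap_first_third:
  "(\<Sum>a<m. \<Sum>b<n. \<Sum>c<m. \<Sum>d<n. F a b c d)
   = (\<Sum>a<m. \<Sum>b<n. \<Sum>c<m. \<Sum>d<n. (F c b a d :: 'a::comm_monoid_add))"
proof -
  have "(\<Sum>a<m. \<Sum>b<n. \<Sum>c<m. \<Sum>d<n. F a b c d) = (\<Sum>a<m. \<Sum>c<m. \<Sum>b<n. \<Sum>d<n. F a b c d)"
    by (rule sum.cong[OF refl], rule sum.swap)
  also have "\<dots> = (\<Sum>c<m. \<Sum>a<m. \<Sum>b<n. \<Sum>d<n. F a b c d)"
    by (rule sum.swap)
  also have "\<dots> = (\<Sum>c<m. \<Sum>b<n. \<Sum>a<m. \<Sum>d<n. F a b c d)"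
    by (rule sum.cong[OF refl], rule sum.swap)
  finally show ?thesis .
qed

lemma index_pair_less:
  assumes "a < m" "b < n"
  shows "a*n+b < m*(n::nat)"
proof -
  have "a*n+b < (a+1)*n" using assms by simp
  also have "\<dots> \<le> m*n" using assms by (intro mult_right_mono) auto
  finally show ?thesis .
qed

lemma index_div_less: "i < m*n \<Longrightarrow> i div n < (m::nat)"
  by (simp add: less_mult_imp_div_less)

lemma index_mod_less: "i < m*n \<Longrightarrow> i mod n < (n::nat)"
  by (cases n) auto

lemma index_mult_mat_sum:
  "A \<in> carrier_mat a b \<Longrightarrow> B \<in> carrier_mat b c \<Longrightarrow> i < a \<Longrightarrow> j < c \<Longrightarrow>
   (A * B) $$ (i,j) = (\<Sum>k<b. A $$ (i,k) * B $$ (k,j))"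
  by (auto simp: scalar_prod_def lessThan_atLeast0 intro!: sum.cong)

lemma mtrace_mult:
  assumes "A \<in> carrier_mat d d" "B \<in> carrier_mat d d"
  shows "mtrace (A * B) = (\<Sum>i<d. \<Sum>k<d. A $$ (i,k) * B $$ (k,i))"
proof -
  have "mtrace (A * B) = (\<Sum>i<d. (A * B) $$ (i,i))"
    unfolding mtrace_def using assms(1) by simp
  then show ?thesis
    using assms by (simp del: index_mult_mat add: index_mult_mat_sum)
qed

lemma adj_carrier: "A \<in> carrier_mat a b \<Longrightarrow> adj A \<in> carrier_mat b a"
  unfolding adj_def by auto

lemma index_adj: "A \<in> carrier_mat a b \<Longrightarrow> i < b \<Longrightarrow> j < a \<Longrightarrow> adj A $$ (i,j) = cnj (A $$ (j,i))"
  unfolding adj_def by auto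

lemma hermitian_iff_entries:
  assumes A: "A \<in> carrier_mat d d"
  shows "hermitian A \<longleftrightarrow> (\<forall>i<d. \<forall>j<d. A $$ (i,j) = cnj (A $$ (j,i)))"
proof
  assume h: "hermitian A"
  show "\<forall>i<d. \<forall>j<d. A $$ (i,j) = cnj (A $$ (j,i))"
  proof (intro allI impI)
    fix i j assume ij: "i < d" "j < d"
    have "A $$ (i,j) = adj A $$ (i,j)"
      using h unfolding hermitian_def by (rule arg_cong[of _ _ "\<lambda>M. M $$ (i,j)"])
    also have "\<dots> = cnj (A $$ (j,i))" by (rule index_adj[OF A ij])
    finally show "A $$ (i,j) = cnj (A $$ (j,i))" .
  qed
next
  assume entries: "\<forall>i<d. \<forall>j<d. A $$ (i,j) = cnj (A $$ (j,i))"
  show "hermitian A"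
    unfolding hermitian_def
  proof (rule eq_matI)
    fix i j assume "i < dim_row (adj A)" "j < dim_col (adj A)"
    then have ij: "i < d" "j < d" using adj_carrier[OF A] by auto
    show "A $$ (i,j) = adj A $$ (i,j)" unfolding index_adj[OF A ij] using entries ij by blast
  qed (use A adj_carrier[OF A] in auto)
qed

lemma congruence_carrier:
  "K \<in> carrier_mat e d \<Longrightarrow> H \<in> carrier_mat d d \<Longrightarrow> K * H * adj K \<in> carrier_mat e e"
  using adj_carrier[of K e d] by auto

lemma index_congruence:
  assumes K: "K \<in> carrier_mat e d" and H: "H \<in> carrier_mat d d" and ij: "i < e" "j < e"
  shows "(K * H * adj K) $$ (i,j) = (\<Sum>k<d. \<Sum>l<d. K $$ (i,k) * H $$ (k,l) * cnj (K $$ (j,l)))"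
proof -
  have "(K * H * adj K) $$ (i,j) = (\<Sum>l<d. (K * H) $$ (i,l) * adj K $$ (l,j))"
    using K H ij adj_carrier[OF K] by (intro index_mult_mat_sum) auto
  also have "\<dots> = (\<Sum>l<d. (\<Sum>k<d. K $$ (i,k) * H $$ (k,l)) * cnj (K $$ (j,l)))"
    using K H ij by (intro sum.cong refl) (simp del: index_mult_mat add: index_mult_mat_sum index_adj)
  also have "\<dots> = (\<Sum>l<d. \<Sum>k<d. K $$ (i,k) * H $$ (k,l) * cnj (K $$ (j,l)))"
    by (simp add: sum_distrib_right)
  also have "\<dots> = (\<Sum>k<d. \<Sum>l<d. K $$ (i,k) * H $$ (k,l) * cnj (K $$ (j,l)))"
    by (rule sum.swap)
  finally show ?thesis .
qed

lemma kron_carrier: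
  "A \<in> carrier_mat p m \<Longrightarrow> B \<in> carrier_mat q n \<Longrightarrow> kron A B \<in> carrier_mat (p*q) (m*n)"
  unfolding kron_def by auto

lemma index_kron:
  "A \<in> carrier_mat p m \<Longrightarrow> B \<in> carrier_mat q n \<Longrightarrow> i < p*q \<Longrightarrow> j < m*n \<Longrightarrow>
   kron A B $$ (i,j) = A $$ (i div q, j div n) * B $$ (i mod q, j mod n)"
  unfolding kron_def by auto

section \<open>Quadratic forms\<close>

definition quad_form :: "nat \<Rightarrow> complex mat \<Rightarrow> (nat \<Rightarrow> complex) \<Rightarrow> complex" where
  "quad_form d M f = (\<Sum>i<d. \<Sum>j<d. cnj (f i) * M $$ (i,j) * f j)"

lemma quad_form_cong: "(\<And>i. i < d \<Longrightarrow> f i = g i) \<Longrightarrow> quad_form d M f = quad_form d M g"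
  unfolding quad_form_def by (auto intro!: sum.cong)

lemma quad_form_zero: "(\<And>i. i < d \<Longrightarrow> f i = 0) \<Longrightarrow> quad_form d M f = 0"
  unfolding quad_form_def by simp

lemma quad_form_scale:
  "quad_form d M (\<lambda>i. complex_of_real t * f i) = complex_of_real (t\<^sup>2) * quad_form d M f"
  unfolding quad_form_def by (simp add: sum_distrib_left algebra_simps power2_eq_square)

lemma quad_form_support:
  assumes S: "S \<subseteq> {..<d}" and f: "\<And>k. k \<notin> S \<Longrightarrow> f k = 0"
  shows "quad_form d M f = (\<Sum>a\<in>S. \<Sum>b\<in>S. cnj (f a) * M $$ (a,b) * f b)"
proof -
  have "quad_form d M f = (\<Sum>a<d. \<Sum>b\<in>S. cnj (f a) * M $$ (a,b) * f b)"
    unfolding quad_form_def using S f by (intro sum.cong refl sum.mono_neutral_right) auto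
  also have "\<dots> = (\<Sum>a\<in>S. \<Sum>b\<in>S. cnj (f a) * M $$ (a,b) * f b)"
    using S f by (intro sum.mono_neutral_right) auto
  finally show ?thesis .
qed

lemma quad_form_single_support:
  "i < d \<Longrightarrow> (\<And>k. k \<noteq> i \<Longrightarrow> f k = 0) \<Longrightarrow> quad_form d M f = cnj (f i) * M $$ (i,i) * f i"
  by (subst quad_form_support[of "{i}"]) auto

lemma quad_form_two_support:
  assumes "i < d" "j < d" "i \<noteq> j" "\<And>k. k \<noteq> i \<Longrightarrow> k \<noteq> j \<Longrightarrow> f k = 0"
  shows "quad_form d M f = cnj (f i) * M $$ (i,i) * f i + cnj (f i) * M $$ (i,j) * f j
     + cnj (f j) * M $$ (j,i) * f i + cnj (f j) * M $$ (j,j) * f j"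
  using assms by (subst quad_form_support[of "{i,j}"]) (auto simp: add.assoc)

lemma quad_form_add_single:
  assumes i: "i < d"
  shows "quad_form d M (\<lambda>k. f k + (if k = i then \<beta> else 0)) = quad_form d M f
     + cnj \<beta> * (\<Sum>l<d. M $$ (i,l) * f l) + (\<Sum>k<d. cnj (f k) * M $$ (k,i)) * \<beta>
     + cnj \<beta> * M $$ (i,i) * \<beta>"
proof -
  define h where "h = (\<lambda>k. if k = i then \<beta> else 0)"
  have expand: "cnj (f k + h k) * M $$ (k,l) * (f l + h l) = cnj (f k) * M $$ (k,l) * f l
      + cnj (f k) * M $$ (k,l) * h l + cnj (h k) * M $$ (k,l) * f l + cnj (h k) * M $$ (k,l) * h l"
    for k l by (simp add: algebra_simps)
  have "quad_form d M (\<lambda>k. f k + h k) = quad_form d M f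
     + (\<Sum>k<d. \<Sum>l<d. cnj (f k) * M $$ (k,l) * h l)
     + (\<Sum>k<d. \<Sum>l<d. cnj (h k) * M $$ (k,l) * f l) + quad_form d M h"
    unfolding quad_form_def by (simp only: expand sum.distrib)
  also have "(\<Sum>k<d. \<Sum>l<d. cnj (f k) * M $$ (k,l) * h l) = (\<Sum>k<d. cnj (f k) * M $$ (k,i)) * \<beta>"
    unfolding h_def sum_distrib_right using i by (intro sum.cong refl) (simp add: if_distrib cong: if_cong)
  also have "(\<Sum>k<d. \<Sum>l<d. cnj (h k) * M $$ (k,l) * f l) = cnj \<beta> * (\<Sum>l<d. M $$ (i,l) * f l)"
  proof -
    have "(\<Sum>k<d. \<Sum>l<d. cnj (h k) * M $$ (k,l) * f l) = (\<Sum>k<d. cnj (h k) * (\<Sum>l<d. M $$ (k,l) * f l))"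
      by (simp add: sum_distrib_left mult.assoc)
    also have "\<dots> = (\<Sum>k<d. if k = i then cnj \<beta> * (\<Sum>l<d. M $$ (k,l) * f l) else 0)"
      unfolding h_def by (intro sum.cong) auto
    finally show ?thesis using i by simp
  qed
  also have "quad_form d M h = cnj \<beta> * M $$ (i,i) * \<beta>"
    using i by (subst quad_form_single_support[of i]) (auto simp: h_def)
  finally show ?thesis unfolding h_def by (simp add: algebra_simps)
qed

lemma hermitian_iff_quad_form_real:
  assumes M: "M \<in> carrier_mat d d"
  shows "hermitian M \<longleftrightarrow> (\<forall>f. Im (quad_form d M f) = 0)"
proof
  assume "hermitian M"
  then have H: "\<forall>i<d. \<forall>j<d. M $$ (i,j) = cnj (M $$ (j,i))"
    using hermitian_iff_entries[OF M] by blast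
  show "\<forall>f. Im (quad_form d M f) = 0"
  proof
    fix f
    have "cnj (quad_form d M f) = (\<Sum>i<d. \<Sum>j<d. f i * cnj (M $$ (i,j)) * cnj (f j))"
      by (simp only: quad_form_def cnj_sum complex_cnj_mult complex_cnj_cnj)
    also have "\<dots> = (\<Sum>i<d. \<Sum>j<d. cnj (f j) * M $$ (j,i) * f i)"
    proof (intro sum.cong refl)
      fix i j assume "i \<in> {..<d}" "j \<in> {..<d}"
      then have "M $$ (j,i) = cnj (M $$ (i,j))" using H by blast
      then show "f i * cnj (M $$ (i,j)) * cnj (f j) = cnj (f j) * M $$ (j,i) * f i" by simp
    qed
    also have "\<dots> = quad_form d M f" unfolding quad_form_def by (rule sum.swap)
    finally show "Im (quad_form d M f) = 0" by (metis Reals_cnj_iff complex_is_Real_iff)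
  qed
next
  assume real: "\<forall>f. Im (quad_form d M f) = 0"
  have diag: "Im (M $$ (i,i)) = 0" if "i < d" for i
    using real[rule_format, of "\<lambda>k. if k = i then 1 else 0"]
    by (subst (asm) quad_form_single_support[OF that]) auto
  show "hermitian M" unfolding hermitian_iff_entries[OF M]
  proof (intro allI impI)
    fix i j assume ij: "i < d" "j < d"
    show "M $$ (i,j) = cnj (M $$ (j,i))"
    proof (cases "i = j")
      case True
      then show ?thesis using diag[OF ij(1)] by (simp add: complex_eq_iff)
    next
      case False
      have "Im (M $$ (i,i) + M $$ (i,j) + M $$ (j,i) + M $$ (j,j)) = 0"
        using real[rule_format, of "\<lambda>k. if k = i then 1 else if k = j then 1 else 0"]
        by (subst (asm) quad_form_two_support[OF ij False]) (use False in auto)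
      moreover have "Im (M $$ (i,i) + \<i> * M $$ (i,j) - \<i> * M $$ (j,i) + M $$ (j,j)) = 0"
        using real[rule_format, of "\<lambda>k. if k = i then 1 else if k = j then \<i> else 0"]
        by (subst (asm) quad_form_two_support[OF ij False]) (use False in \<open>auto simp: algebra_simps\<close>)
      ultimately show ?thesis using diag ij by (simp add: complex_eq_iff)
    qed
  qed
qed

lemma psd_iff_quad_form:
  "psd d M \<longleftrightarrow> M \<in> carrier_mat d d \<and> (\<forall>f. Im (quad_form d M f) = 0 \<and> 0 \<le> Re (quad_form d M f))"
proof -
  have "quad_form d M (\<lambda>i. v $ i) = (\<Sum>i<d. \<Sum>j<d. cnj (v $ i) * M $$ (i,j) * v $ j)" for v
    unfolding quad_form_def ..
  moreover have "quad_form d M f = quad_form d M (\<lambda>i. vec d f $ i)" for f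
    by (rule quad_form_cong) simp
  ultimately show ?thesis
    unfolding psd_def Let_def by (metis vec_carrier)
qed

lemma psd_iff_hermitian_nonneg:
  "psd d M \<longleftrightarrow> M \<in> carrier_mat d d \<and> hermitian M \<and> (\<forall>f. 0 \<le> Re (quad_form d M f))"
  using psd_iff_quad_form hermitian_iff_quad_form_real by blast

lemma psd_diag_real:
  assumes "psd d M" "i < d"
  shows "M $$ (i,i) = complex_of_real (Re (M $$ (i,i)))" "0 \<le> Re (M $$ (i,i))"
proof -
  have "quad_form d M (\<lambda>k. if k = i then 1 else 0) = M $$ (i,i)"
    using assms(2) by (subst quad_form_single_support) auto
  then have "Im (M $$ (i,i)) = 0" "0 \<le> Re (M $$ (i,i))"
    using assms(1) unfolding psd_iff_quad_form by metis+
  then show "M $$ (i,i) = complex_of_real (Re (M $$ (i,i)))" "0 \<le> Re (M $$ (i,i))"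
    by (simp_all add: complex_eq_iff)
qed

lemma psd_index_cnj: "psd d M \<Longrightarrow> i < d \<Longrightarrow> j < d \<Longrightarrow> M $$ (i,j) = cnj (M $$ (j,i))"
  by (meson hermitian_iff_entries psd_iff_hermitian_nonneg)

definition adj_apply :: "complex mat \<Rightarrow> (nat \<Rightarrow> complex) \<Rightarrow> nat \<Rightarrow> complex" where
  "adj_apply K v = (\<lambda>l. \<Sum>j<dim_row K. cnj (K $$ (j,l)) * v j)"

lemma quad_form_congruence:
  assumes K: "K \<in> carrier_mat e d" and H: "H \<in> carrier_mat d d"
  shows "quad_form e (K * H * adj K) v = quad_form d H (adj_apply K v)"
proof -
  define w where "w = adj_apply K v"
  have w: "w l = (\<Sum>j<e. cnj (K $$ (j,l)) * v j)" for l
    unfolding w_def adj_apply_def using K by simp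
  have "quad_form e (K * H * adj K) v
      = (\<Sum>i<e. \<Sum>j<e. \<Sum>k<d. \<Sum>l<d. (cnj (v i) * K $$ (i,k)) * H $$ (k,l) * (cnj (K $$ (j,l)) * v j))"
    unfolding quad_form_def using K H
    by (intro sum.cong refl) (simp add: index_congruence sum_distrib_left sum_distrib_right ac_simps)
  also have "\<dots> = (\<Sum>k<d. \<Sum>l<d. \<Sum>i<e. \<Sum>j<e. (cnj (v i) * K $$ (i,k)) * H $$ (k,l) * (cnj (K $$ (j,l)) * v j))"
    by (rule sum_swap_pairs)
  also have "\<dots> = quad_form d H w"
    unfolding quad_form_def w by (simp add: sum_distrib_left sum_distrib_right ac_simps)
  finally show ?thesis unfolding w_def .
qed

lemma psd_congruence:
  assumes K: "K \<in> carrier_mat e d" and H: "psd d H"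
  shows "psd e (K * H * adj K)"
  using H congruence_carrier[OF K] quad_form_congruence[OF K]
  unfolding psd_iff_quad_form by auto

lemma hermitian_congruence:
  assumes K: "K \<in> carrier_mat e d" and H: "H \<in> carrier_mat d d" and h: "hermitian H"
  shows "hermitian (K * H * adj K)"
  unfolding hermitian_iff_quad_form_real[OF congruence_carrier[OF K H]] quad_form_congruence[OF K H]
  using h hermitian_iff_quad_form_real[OF H] by blast

section \<open>Rank-one decompositions of positive semidefinite matrices\<close>

lemma psd_zero_diag:
  assumes P: "psd d M" and ij: "i < d" "j < d" and zero: "M $$ (i,i) = 0"
  shows "M $$ (i,j) = 0"
proof (rule ccontr)
  assume nz: "M $$ (i,j) \<noteq> 0"
  then have "i \<noteq> j" using zero by auto
  define z where "z = M $$ (i,j)"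
  define t where "t = (Re (M $$ (j,j)) + 1) / (2 * (cmod z)\<^sup>2)"
  define x where "x = - complex_of_real t * z"
  \<comment> \<open>along \<open>x e\<^sub>i + e\<^sub>j\<close> the form is \<open>M\<^sub>j\<^sub>j - 2t|z|\<^sup>2\<close>,
    which this choice of \<open>t\<close> makes negative\<close>
  have "M $$ (j,i) = cnj z" unfolding z_def using psd_index_cnj[OF P ij(2,1)] .
  then have "quad_form d M (\<lambda>k. if k = i then x else if k = j then 1 else 0)
      = cnj x * z + cnj z * x + M $$ (j,j)"
    by (subst quad_form_two_support[OF ij \<open>i \<noteq> j\<close>]) (auto simp: zero z_def)
  also have "cnj x * z + cnj z * x = - 2 * complex_of_real (t * (cmod z)\<^sup>2)"
    unfolding x_def by (simp add: algebra_simps flip: of_real_power complex_norm_square)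
  finally have "Re (quad_form d M (\<lambda>k. if k = i then x else if k = j then 1 else 0))
      = Re (M $$ (j,j)) - 2 * (t * (cmod z)\<^sup>2)"
    by simp
  also have "2 * (t * (cmod z)\<^sup>2) = Re (M $$ (j,j)) + 1"
    unfolding t_def using nz by (simp add: z_def)
  finally have "Re (quad_form d M (\<lambda>k. if k = i then x else if k = j then 1 else 0)) < 0"
    by simp
  then show False using P unfolding psd_iff_quad_form by (meson not_le)
qed

lemma psd_schur_complement:
  assumes P: "psd d M" and i: "i < d" and nz: "M $$ (i,i) \<noteq> 0"
  shows "psd d (mat d d (\<lambda>(k,l). M $$ (k,l) - M $$ (k,i) * M $$ (i,l) / M $$ (i,i)))"
    (is "psd d ?S")
  unfolding psd_iff_quad_form
proof (intro conjI allI)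
  show "?S \<in> carrier_mat d d" by simp
  fix f
  define c where "c = (\<Sum>l<d. M $$ (i,l) * f l)"
  define a where "a = (\<Sum>k<d. cnj (f k) * M $$ (k,i))"
  have real: "cnj (M $$ (i,i)) = M $$ (i,i)" using psd_index_cnj[OF P i i] by simp
  have "a = cnj c"
    unfolding a_def c_def cnj_sum using psd_index_cnj[OF P _ i] by (intro sum.cong) auto
  then have cnj_shift: "cnj (- c / M $$ (i,i)) = - a / M $$ (i,i)" using real by simp
  have "quad_form d ?S f
      = (\<Sum>k<d. \<Sum>l<d. cnj (f k) * M $$ (k,l) * f l
          - (cnj (f k) * M $$ (k,i)) * (M $$ (i,l) * f l) / M $$ (i,i))"
    unfolding quad_form_def by (intro sum.cong refl) (simp add: algebra_simps)
  also have "\<dots> = quad_form d M f - a * c / M $$ (i,i)"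
    unfolding quad_form_def a_def c_def sum_subtractf sum_divide_distrib[symmetric] sum_product ..
  \<comment> \<open>completing the square in the \<open>i\<close>-th coordinate\<close>
  also have "\<dots> = quad_form d M (\<lambda>k. f k + (if k = i then - c / M $$ (i,i) else 0))"
    unfolding quad_form_add_single[OF i] cnj_shift a_def[symmetric] c_def[symmetric]
    using nz by (simp add: field_simps)
  finally show "Im (quad_form d ?S f) = 0" "0 \<le> Re (quad_form d ?S f)"
    using P unfolding psd_iff_quad_form by metis+
qed

lemma psd_split_rank_one:
  assumes P: "psd d M" and i: "i < d" and nz: "M $$ (i,i) \<noteq> 0"
  obtains M' u where "psd d M'" "M' $$ (i,i) = 0" "\<And>k. k < d \<Longrightarrow> M $$ (k,k) = 0 \<Longrightarrow> M' $$ (k,k) = 0"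
    "\<And>k l. k < d \<Longrightarrow> l < d \<Longrightarrow> M $$ (k,l) = M' $$ (k,l) + u k * cnj (u l)"
proof
  define r where "r = Re (M $$ (i,i))"
  define M' where "M' = mat d d (\<lambda>(k,l). M $$ (k,l) - M $$ (k,i) * M $$ (i,l) / M $$ (i,i))"
  define u where "u = (\<lambda>k. M $$ (k,i) / complex_of_real (sqrt r))"
  have Mii: "M $$ (i,i) = complex_of_real r"
    unfolding r_def by (rule psd_diag_real(1)[OF P i])
  have "0 \<le> r"
    unfolding r_def by (rule psd_diag_real(2)[OF P i])
  then have r: "0 < r" using nz Mii by (cases "r = 0") auto
  show "psd d M'" unfolding M'_def by (rule psd_schur_complement[OF P i nz])
  show "M' $$ (i,i) = 0" unfolding M'_def using i nz by simp
  show "M' $$ (k,k) = 0" if "k < d" "M $$ (k,k) = 0" for k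
    unfolding M'_def using that psd_zero_diag[OF P that(1) i] by simp
  show "M $$ (k,l) = M' $$ (k,l) + u k * cnj (u l)" if "k < d" "l < d" for k l
  proof -
    have "u k * cnj (u l) = M $$ (k,i) * M $$ (i,l) / M $$ (i,i)"
      unfolding u_def Mii using psd_index_cnj[OF P i that(2)] r
      by (simp flip: of_real_mult)
    then show ?thesis unfolding M'_def using that by simp
  qed
qed

lemma psd_outer_decomposition:
  assumes "psd d M"
  shows "\<exists>N g. \<forall>i<d. \<forall>j<d. M $$ (i,j) = (\<Sum>s<(N::nat). g s i * cnj (g s j))"
  using assms
proof (induction "card {k. k < d \<and> M $$ (k,k) \<noteq> 0}" arbitrary: M rule: less_induct)
  case less
  show ?case
  proof (cases "\<exists>i<d. M $$ (i,i) \<noteq> 0")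
    case False
    then show ?thesis using psd_zero_diag[OF less.prems] by (intro exI[of _ 0]) auto
  next
    case True
    then obtain i where i: "i < d" "M $$ (i,i) \<noteq> 0" by blast
    obtain M' u where P': "psd d M'" and "M' $$ (i,i) = 0"
      and "\<And>k. k < d \<Longrightarrow> M $$ (k,k) = 0 \<Longrightarrow> M' $$ (k,k) = 0"
      and split: "\<And>k l. k < d \<Longrightarrow> l < d \<Longrightarrow> M $$ (k,l) = M' $$ (k,l) + u k * cnj (u l)"
      using psd_split_rank_one[OF less.prems i] by metis
    then have "{k. k < d \<and> M' $$ (k,k) \<noteq> 0} \<subset> {k. k < d \<and> M $$ (k,k) \<noteq> 0}"
      using i by auto
    then have "card {k. k < d \<and> M' $$ (k,k) \<noteq> 0} < card {k. k < d \<and> M $$ (k,k) \<noteq> 0}"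
      by (rule psubset_card_mono[rotated]) simp
    then obtain N g where g: "\<forall>i<d. \<forall>j<d. M' $$ (i,j) = (\<Sum>s<(N::nat). g s i * cnj (g s j))"
      using less.hyps P' by blast
    have "\<forall>k<d. \<forall>l<d. M $$ (k,l) = (\<Sum>s<Suc N. (g(N := u)) s k * cnj ((g(N := u)) s l))"
      using split g by simp
    then show ?thesis by blast
  qed
qed

lemma mtrace_mult_outer_sum:
  assumes S: "finite S" and W: "W \<in> carrier_mat d d" and R: "R \<in> carrier_mat d d"
    and R_eq: "\<And>i j. i < d \<Longrightarrow> j < d \<Longrightarrow> R $$ (i,j) = (\<Sum>s\<in>S. g s i * cnj (g s j))"
  shows "mtrace (W * R) = (\<Sum>s\<in>S. quad_form d W (g s))"
proof -
  have "mtrace (W * R) = (\<Sum>i<d. \<Sum>k<d. \<Sum>s\<in>S. cnj (g s i) * W $$ (i,k) * g s k)"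
    unfolding mtrace_mult[OF W R]
    by (intro sum.cong refl) (simp add: R_eq sum_distrib_left algebra_simps)
  also have "\<dots> = (\<Sum>i<d. \<Sum>s\<in>S. \<Sum>k<d. cnj (g s i) * W $$ (i,k) * g s k)"
    by (rule sum.cong[OF refl], rule sum.swap)
  also have "\<dots> = (\<Sum>s\<in>S. quad_form d W (g s))"
    unfolding quad_form_def by (rule sum.swap)
  finally show ?thesis .
qed

lemma mtrace_mult_psd_nonneg:
  assumes W: "psd d W" and R: "psd d R"
  shows "0 \<le> Re (mtrace (W * R))"
proof -
  obtain N g where "\<forall>i<d. \<forall>j<d. R $$ (i,j) = (\<Sum>s<(N::nat). g s i * cnj (g s j))"
    using psd_outer_decomposition[OF R] by blast
  then have "mtrace (W * R) = (\<Sum>s<N. quad_form d W (g s))"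
    using W R by (intro mtrace_mult_outer_sum) (auto simp: psd_iff_quad_form)
  then show ?thesis using W unfolding psd_iff_quad_form by (auto intro: sum_nonneg)
qed

section \<open>Block positivity\<close>

definition outer_mat :: "nat \<Rightarrow> (nat \<Rightarrow> complex) \<Rightarrow> complex mat" where
  "outer_mat d g = mat d d (\<lambda>(i,j). g i * cnj (g j))"

lemma mtrace_mult_outer_mat:
  "W \<in> carrier_mat d d \<Longrightarrow> mtrace (W * outer_mat d g) = quad_form d W g"
  using mtrace_mult_outer_sum[of "{()}" W d "outer_mat d g" "\<lambda>_. g"]
  by (simp add: outer_mat_def)

lemma state_outer_mat:
  assumes unit: "(\<Sum>i<d. (cmod (g i))\<^sup>2) = 1"
  shows "state d (outer_mat d g)"
proof -
  have "psd d (outer_mat d g)"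
    unfolding psd_iff_quad_form
  proof (intro conjI allI)
    show "outer_mat d g \<in> carrier_mat d d" by (simp add: outer_mat_def)
    fix f
    define c where "c = (\<Sum>j<d. cnj (g j) * f j)"
    have "quad_form d (outer_mat d g) f = cnj c * c"
      unfolding c_def quad_form_def outer_mat_def cnj_sum sum_product
      by (intro sum.cong refl) (simp add: ac_simps)
    then show "Im (quad_form d (outer_mat d g) f) = 0" "0 \<le> Re (quad_form d (outer_mat d g) f)"
      by simp_all
  qed
  moreover have "mtrace (outer_mat d g) = complex_of_real (\<Sum>i<d. (cmod (g i))\<^sup>2)"
    unfolding mtrace_def outer_mat_def by (simp flip: of_real_power complex_norm_square)
  ultimately show ?thesis unfolding state_def unit by simp
qed

lemma exists_unit_multiple:
  fixes d :: nat
  assumes "i < d" "f i \<noteq> 0"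
  shows "\<exists>t>0. (\<Sum>j<d. (cmod (complex_of_real t * f j))\<^sup>2) = 1"
proof -
  define \<alpha> where "\<alpha> = (\<Sum>j<d. (cmod (f j))\<^sup>2)"
  have "0 < \<alpha>" unfolding \<alpha>_def using assms by (intro sum_pos2[of _ i]) auto
  then have "(cmod (complex_of_real (1 / sqrt \<alpha>) * f j))\<^sup>2 = (cmod (f j))\<^sup>2 / \<alpha>" for j
    by (simp add: norm_divide power_divide)
  then have "(\<Sum>j<d. (cmod (complex_of_real (1 / sqrt \<alpha>) * f j))\<^sup>2) = 1"
    using \<open>0 < \<alpha>\<close> by (simp add: sum_divide_distrib[symmetric] \<alpha>_def[symmetric])
  then show ?thesis using \<open>0 < \<alpha>\<close> by (intro exI[of _ "1 / sqrt \<alpha>"]) simp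
qed

definition tensor_vec :: "nat \<Rightarrow> (nat \<Rightarrow> complex) \<Rightarrow> (nat \<Rightarrow> complex) \<Rightarrow> nat \<Rightarrow> complex" where
  "tensor_vec n a b = (\<lambda>i. a (i div n) * b (i mod n))"

lemma kron_outer_mat: "kron (outer_mat m a) (outer_mat n b) = outer_mat (m*n) (tensor_vec n a b)"
  by (rule eq_matI)
    (auto simp: kron_def outer_mat_def tensor_vec_def index_div_less index_mod_less)

lemma separable_kron:
  assumes A: "state m A" and B: "state n B"
  shows "separable m n (kron A B)"
proof -
  have "kron A B \<in> carrier_mat (m*n) (m*n)"
    using A B by (intro kron_carrier) (auto simp: state_def psd_def)
  then have "kron A B = mat (m*n) (m*n) (\<lambda>(i,j). \<Sum>k<Suc 0. complex_of_real 1 * kron A B $$ (i,j))"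
    by (auto intro!: eq_matI)
  then show ?thesis
    unfolding separable_def using A B
    by (intro exI[of _ "Suc 0"] exI[of _ "\<lambda>_. 1"] exI[of _ "\<lambda>_. A"] exI[of _ "\<lambda>_. B"]) simp
qed

definition block_positive :: "nat \<Rightarrow> nat \<Rightarrow> complex mat \<Rightarrow> bool" where
  "block_positive m n W \<longleftrightarrow> (\<forall>a b. 0 \<le> Re (quad_form (m*n) W (tensor_vec n a b)))"

lemma block_positive_of_separable_nonneg:
  assumes W: "W \<in> carrier_mat (m*n) (m*n)"
    and sep: "\<And>\<sigma>. separable m n \<sigma> \<Longrightarrow> 0 \<le> Re (mtrace (W * \<sigma>))"
  shows "block_positive m n W"
  unfolding block_positive_def
proof (intro allI)
  fix a b
  show "0 \<le> Re (quad_form (m*n) W (tensor_vec n a b))"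
  proof (cases "\<exists>i<m*n. tensor_vec n a b i \<noteq> 0")
    case False
    then show ?thesis by (simp add: quad_form_zero)
  next
    case True
    then obtain i where i: "i < m*n" "a (i div n) \<noteq> 0" "b (i mod n) \<noteq> 0"
      by (auto simp: tensor_vec_def)
    obtain s where s: "s > 0" "(\<Sum>j<m. (cmod (complex_of_real s * a j))\<^sup>2) = 1"
      using exists_unit_multiple[of "i div n" m a] index_div_less[OF i(1)] i(2) by blast
    obtain t where t: "t > 0" "(\<Sum>j<n. (cmod (complex_of_real t * b j))\<^sup>2) = 1"
      using exists_unit_multiple[of "i mod n" n b] index_mod_less[OF i(1)] i(3) by blast
    define a' where "a' = (\<lambda>j. complex_of_real s * a j)"
    define b' where "b' = (\<lambda>j. complex_of_real t * b j)"
    have "separable m n (outer_mat (m*n) (tensor_vec n a' b'))"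
      unfolding kron_outer_mat[symmetric] a'_def b'_def
      by (intro separable_kron state_outer_mat s t)
    then have "0 \<le> Re (quad_form (m*n) W (tensor_vec n a' b'))"
      using sep mtrace_mult_outer_mat[OF W] by metis
    also have "tensor_vec n a' b' = (\<lambda>j. complex_of_real (s * t) * tensor_vec n a b j)"
      unfolding a'_def b'_def tensor_vec_def by (simp add: fun_eq_iff ac_simps)
    also have "quad_form (m*n) W \<dots> = complex_of_real ((s * t)\<^sup>2) * quad_form (m*n) W (tensor_vec n a b)"
      by (rule quad_form_scale)
    finally show ?thesis
      using s t by (simp add: zero_le_mult_iff)
  qed
qed

lemma mtrace_mult_kron_nonneg:
  assumes W: "W \<in> carrier_mat (m*n) (m*n)" and BP: "block_positive m n W"
    and A: "psd m A" and B: "psd n B"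
  shows "0 \<le> Re (mtrace (W * kron A B))"
proof -
  obtain NA ga where ga: "\<forall>i<m. \<forall>j<m. A $$ (i,j) = (\<Sum>s<(NA::nat). ga s i * cnj (ga s j))"
    using psd_outer_decomposition[OF A] by blast
  obtain NB gb where gb: "\<forall>i<n. \<forall>j<n. B $$ (i,j) = (\<Sum>s<(NB::nat). gb s i * cnj (gb s j))"
    using psd_outer_decomposition[OF B] by blast
  have AB: "A \<in> carrier_mat m m" "B \<in> carrier_mat n n"
    using A B by (auto simp: psd_iff_quad_form)
  define G where "G = (\<lambda>(s,t). tensor_vec n (ga s) (gb t))"
  have "kron A B $$ (i,j) = (\<Sum>x\<in>{..<NA} \<times> {..<NB}. G x i * cnj (G x j))"
    if ij: "i < m*n" "j < m*n" for i j
  proof -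
    have "kron A B $$ (i,j) = A $$ (i div n, j div n) * B $$ (i mod n, j mod n)"
      using index_kron[OF AB ij] .
    also have "\<dots> = (\<Sum>s<NA. ga s (i div n) * cnj (ga s (j div n)))
        * (\<Sum>t<NB. gb t (i mod n) * cnj (gb t (j mod n)))"
      using ga gb ij by (simp add: index_div_less index_mod_less)
    also have "\<dots> = (\<Sum>x\<in>{..<NA} \<times> {..<NB}. G x i * cnj (G x j))"
      unfolding sum_product sum.cartesian_product G_def tensor_vec_def
      by (intro sum.cong refl) (auto simp: ac_simps)
    finally show ?thesis .
  qed
  then have "mtrace (W * kron A B) = (\<Sum>x\<in>{..<NA} \<times> {..<NB}. quad_form (m*n) W (G x))"
    using W kron_carrier[OF AB] by (intro mtrace_mult_outer_sum) auto
  then show ?thesis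
    using BP unfolding block_positive_def G_def by (auto intro: sum_nonneg)
qed

lemma mtrace_mult_separable_nonneg:
  assumes W: "W \<in> carrier_mat (m*n) (m*n)" and BP: "block_positive m n W"
    and S: "separable m n \<sigma>"
  shows "0 \<le> Re (mtrace (W * \<sigma>))"
proof -
  obtain K :: nat and p :: "nat \<Rightarrow> real" and A B
    where pAB: "\<forall>k<K. 0 \<le> p k \<and> state m (A k) \<and> state n (B k)"
    and \<sigma>: "\<sigma> = mat (m*n) (m*n) (\<lambda>(i,j). \<Sum>k<K. complex_of_real (p k) * kron (A k) (B k) $$ (i,j))"
    using S unfolding separable_def by blast
  have AB: "A k \<in> carrier_mat m m" "B k \<in> carrier_mat n n" if "k < K" for k
    using pAB that by (auto simp: state_def psd_def)
  have "mtrace (W * \<sigma>) = (\<Sum>i<m*n. \<Sum>l<m*n. \<Sum>k<K.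
      complex_of_real (p k) * (W $$ (i,l) * kron (A k) (B k) $$ (l,i)))"
    using W unfolding \<sigma> by (auto simp: mtrace_mult sum_distrib_left ac_simps intro!: sum.cong)
  also have "\<dots> = (\<Sum>i<m*n. \<Sum>k<K. \<Sum>l<m*n.
      complex_of_real (p k) * (W $$ (i,l) * kron (A k) (B k) $$ (l,i)))"
    by (rule sum.cong[OF refl], rule sum.swap)
  also have "\<dots> = (\<Sum>k<K. \<Sum>i<m*n. \<Sum>l<m*n.
      complex_of_real (p k) * (W $$ (i,l) * kron (A k) (B k) $$ (l,i)))"
    by (rule sum.swap)
  also have "\<dots> = (\<Sum>k<K. complex_of_real (p k) * mtrace (W * kron (A k) (B k)))"
    using AB by (intro sum.cong refl) (simp add: mtrace_mult[OF W] kron_carrier sum_distrib_left)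
  finally have "Re (mtrace (W * \<sigma>)) = (\<Sum>k<K. p k * Re (mtrace (W * kron (A k) (B k))))"
    by simp
  also have "0 \<le> \<dots>"
    using pAB W BP mtrace_mult_kron_nonneg by (auto simp: state_def intro!: sum_nonneg)
  finally show ?thesis .
qed

lemma separable_nonneg_iff_block_positive:
  "W \<in> carrier_mat (m*n) (m*n) \<Longrightarrow>
   (\<forall>\<sigma>. separable m n \<sigma> \<longrightarrow> 0 \<le> Re (mtrace (W * \<sigma>))) \<longleftrightarrow> block_positive m n W"
  using block_positive_of_separable_nonneg mtrace_mult_separable_nonneg by blast

lemma EW_iff:
  "EW m n W \<longleftrightarrow> W \<in> carrier_mat (m*n) (m*n) \<and> hermitian W \<and> block_positive m n W
     \<and> (\<exists>f. Re (quad_form (m*n) W f) < 0)"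
proof
  assume E: "EW m n W"
  then have W: "W \<in> carrier_mat (m*n) (m*n)" and h: "hermitian W"
    and sep: "\<forall>\<sigma>. separable m n \<sigma> \<longrightarrow> 0 \<le> Re (mtrace (W * \<sigma>))"
    unfolding EW_def by auto
  obtain \<rho> where \<rho>: "psd (m*n) \<rho>" "Re (mtrace (W * \<rho>)) < 0"
    using E unfolding EW_def entangled_def state_def detects_def by blast
  have "\<not> psd (m*n) W" using mtrace_mult_psd_nonneg[OF _ \<rho>(1)] \<rho>(2) by force
  then have "\<exists>f. Re (quad_form (m*n) W f) < 0"
    using W h unfolding psd_iff_hermitian_nonneg by (auto simp: not_le)
  then show "W \<in> carrier_mat (m*n) (m*n) \<and> hermitian W \<and> block_positive m n W
      \<and> (\<exists>f. Re (quad_form (m*n) W f) < 0)"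
    using W h sep separable_nonneg_iff_block_positive by blast
next
  assume "W \<in> carrier_mat (m*n) (m*n) \<and> hermitian W \<and> block_positive m n W
      \<and> (\<exists>f. Re (quad_form (m*n) W f) < 0)"
  then obtain f where W: "W \<in> carrier_mat (m*n) (m*n)" and h: "hermitian W"
    and BP: "block_positive m n W" and neg: "Re (quad_form (m*n) W f) < 0"
    by blast
  obtain i where i: "i < m*n" "f i \<noteq> 0"
    using neg quad_form_zero[of "m*n" f W] by force
  obtain t where t: "t > 0" "(\<Sum>j<m*n. (cmod (complex_of_real t * f j))\<^sup>2) = 1"
    using exists_unit_multiple[of i "m*n" f, OF i] by blast
  define \<rho> where "\<rho> = outer_mat (m*n) (\<lambda>j. complex_of_real t * f j)"
  have "Re (mtrace (W * \<rho>)) = t\<^sup>2 * Re (quad_form (m*n) W f)"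
    unfolding \<rho>_def mtrace_mult_outer_mat[OF W] quad_form_scale by simp
  also have "\<dots> < 0" using neg t by (simp add: mult_pos_neg)
  finally have detect: "Re (mtrace (W * \<rho>)) < 0" .
  have "state (m*n) \<rho>" unfolding \<rho>_def using t by (intro state_outer_mat)
  moreover have "\<not> separable m n \<rho>"
    using mtrace_mult_separable_nonneg[OF W BP] detect by force
  ultimately show "EW m n W"
    unfolding EW_def entangled_def detects_def
    using W h BP separable_nonneg_iff_block_positive detect by blast
qed

lemma psd_not_EW: "psd (m*n) W \<Longrightarrow> \<not> EW m n W"
  by (auto simp: EW_iff psd_iff_hermitian_nonneg not_less)

section \<open>Local projections and partial transposition\<close>

lemma lproj_carrier:
  "U \<in> carrier_mat p m \<Longrightarrow> V \<in> carrier_mat q n \<Longrightarrow> X \<in> carrier_mat (m*n) (m*n) \<Longrightarrow>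
   lproj U V X \<in> carrier_mat (p*q) (p*q)"
  unfolding lproj_def by (metis congruence_carrier kron_carrier)

lemma psd_lproj:
  "U \<in> carrier_mat p m \<Longrightarrow> V \<in> carrier_mat q n \<Longrightarrow> psd (m*n) X \<Longrightarrow> psd (p*q) (lproj U V X)"
  unfolding lproj_def by (metis psd_congruence kron_carrier)

lemma hermitian_lproj:
  "U \<in> carrier_mat p m \<Longrightarrow> V \<in> carrier_mat q n \<Longrightarrow> X \<in> carrier_mat (m*n) (m*n) \<Longrightarrow>
   hermitian X \<Longrightarrow> hermitian (lproj U V X)"
  unfolding lproj_def by (metis hermitian_congruence kron_carrier)

lemma lproj_add:
  assumes U: "U \<in> carrier_mat p m" and V: "V \<in> carrier_mat q n"
    and A: "A \<in> carrier_mat (m*n) (m*n)" and B: "B \<in> carrier_mat (m*n) (m*n)"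
  shows "lproj U V (A + B) = lproj U V A + lproj U V B"
proof -
  have K: "kron U V \<in> carrier_mat (p*q) (m*n)" by (rule kron_carrier[OF U V])
  have "kron U V * (A + B) = kron U V * A + kron U V * B"
    by (rule mult_add_distrib_mat[OF K A B])
  moreover have "(kron U V * A + kron U V * B) * adj (kron U V)
      = kron U V * A * adj (kron U V) + kron U V * B * adj (kron U V)"
    using K A B adj_carrier[OF K] by (intro add_mult_distrib_mat) auto
  ultimately show ?thesis unfolding lproj_def by simp
qed

lemma adj_apply_kron:
  assumes U: "U \<in> carrier_mat p m" and V: "V \<in> carrier_mat q n" and l: "l < m*n"
  shows "adj_apply (kron U V) v l
    = (\<Sum>j1<p. \<Sum>j2<q. cnj (U $$ (j1, l div n)) * cnj (V $$ (j2, l mod n)) * v (j1*q + j2))"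
  unfolding adj_apply_def using kron_carrier[OF U V] U V l
  by (simp add: sum_lessThan_mult index_kron index_pair_less)

lemma adj_apply_kron_tensor:
  assumes U: "U \<in> carrier_mat p m" and V: "V \<in> carrier_mat q n" and l: "l < m*n"
  shows "adj_apply (kron U V) (tensor_vec q a b) l = tensor_vec n (adj_apply U a) (adj_apply V b) l"
  unfolding adj_apply_kron[OF assms] using U V
  by (simp add: adj_apply_def tensor_vec_def sum_product ac_simps)

lemma block_positive_lproj:
  assumes U: "U \<in> carrier_mat p m" and V: "V \<in> carrier_mat q n"
    and W: "W \<in> carrier_mat (m*n) (m*n)" and BP: "block_positive m n W"
  shows "block_positive p q (lproj U V W)"
  unfolding block_positive_def
proof (intro allI)
  fix a b
  have "quad_form (p*q) (lproj U V W) (tensor_vec q a b)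
      = quad_form (m*n) W (adj_apply (kron U V) (tensor_vec q a b))"
    unfolding lproj_def by (rule quad_form_congruence[OF kron_carrier[OF U V] W])
  also have "\<dots> = quad_form (m*n) W (tensor_vec n (adj_apply U a) (adj_apply V b))"
    by (intro quad_form_cong adj_apply_kron_tensor[OF U V])
  finally show "0 \<le> Re (quad_form (p*q) (lproj U V W) (tensor_vec q a b))"
    using BP unfolding block_positive_def by simp
qed

lemma ptrans_carrier: "ptrans m n M \<in> carrier_mat (m*n) (m*n)"
  unfolding ptrans_def by simp

lemma index_ptrans_pair:
  assumes "i1 < m" "i2 < n" "j1 < m" "j2 < n"
  shows "ptrans m n M $$ (i1*n + i2, j1*n + j2) = M $$ (j1*n + i2, i1*n + j2)"
  unfolding ptrans_def using assms index_pair_less[of i1 m i2 n] index_pair_less[of j1 m j2 n]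
  by simp

lemma index_lproj:
  assumes U: "U \<in> carrier_mat p m" and V: "V \<in> carrier_mat q n"
    and X: "X \<in> carrier_mat (m*n) (m*n)" and ij: "i < p*q" "j < p*q"
  shows "lproj U V X $$ (i,j) = (\<Sum>k1<m. \<Sum>k2<n. \<Sum>l1<m. \<Sum>l2<n.
     U $$ (i div q, k1) * V $$ (i mod q, k2) * X $$ (k1*n + k2, l1*n + l2)
       * cnj (U $$ (j div q, l1)) * cnj (V $$ (j mod q, l2)))"
  unfolding lproj_def index_congruence[OF kron_carrier[OF U V] X ij]
  using U V ij by (simp add: sum_lessThan_mult index_kron index_pair_less ac_simps)

lemma lproj_ptrans:
  assumes U: "U \<in> carrier_mat p m" and V: "V \<in> carrier_mat q n" and X: "X \<in> carrier_mat (m*n) (m*n)"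
  shows "lproj U V (ptrans m n X) = ptrans p q (lproj (map_mat cnj U) V X)"
proof (rule eq_matI)
  have U': "map_mat cnj U \<in> carrier_mat p m" using U by simp
  show "dim_row (lproj U V (ptrans m n X)) = dim_row (ptrans p q (lproj (map_mat cnj U) V X))"
    "dim_col (lproj U V (ptrans m n X)) = dim_col (ptrans p q (lproj (map_mat cnj U) V X))"
    using lproj_carrier[OF U V ptrans_carrier, of X] ptrans_carrier[of p q "lproj (map_mat cnj U) V X"]
    by simp_all
  fix i j assume "i < dim_row (ptrans p q (lproj (map_mat cnj U) V X))"
    "j < dim_col (ptrans p q (lproj (map_mat cnj U) V X))"
  then have ij: "i < p*q" "j < p*q" by (simp_all add: ptrans_def)
  then have idx: "i div q < p" "i mod q < q" "j div q < p" "j mod q < q"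
    by (simp_all add: index_div_less index_mod_less)
  have "ptrans p q (lproj (map_mat cnj U) V X) $$ (i,j)
      = lproj (map_mat cnj U) V X $$ ((j div q)*q + i mod q, (i div q)*q + j mod q)"
    unfolding ptrans_def using ij by simp
  also have "\<dots> = (\<Sum>k1<m. \<Sum>k2<n. \<Sum>l1<m. \<Sum>l2<n.
      cnj (U $$ (j div q, k1)) * V $$ (i mod q, k2) * X $$ (k1*n + k2, l1*n + l2)
        * U $$ (i div q, l1) * cnj (V $$ (j mod q, l2)))"
    using U idx by (simp add: index_lproj[OF U' V X] index_pair_less)
  also have "\<dots> = (\<Sum>k1<m. \<Sum>k2<n. \<Sum>l1<m. \<Sum>l2<n.
      cnj (U $$ (j div q, l1)) * V $$ (i mod q, k2) * X $$ (l1*n + k2, k1*n + l2)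
        * U $$ (i div q, k1) * cnj (V $$ (j mod q, l2)))"
    by (rule sum4_swap_first_third)
  also have "\<dots> = lproj U V (ptrans m n X) $$ (i,j)"
    unfolding index_lproj[OF U V ptrans_carrier ij]
    by (intro sum.cong refl) (simp add: index_ptrans_pair; simp add: ac_simps)
  finally show "lproj U V (ptrans m n X) $$ (i,j) = ptrans p q (lproj (map_mat cnj U) V X) $$ (i,j)"
    by (rule sym)
qed

lemma hermitian_ptrans:
  assumes X: "X \<in> carrier_mat (m*n) (m*n)" and h: "hermitian X"
  shows "hermitian (ptrans m n X)"
  unfolding hermitian_iff_entries[OF ptrans_carrier]
proof (intro allI impI)
  fix i j assume ij: "i < m*n" "j < m*n"
  have entries: "\<forall>i<m*n. \<forall>j<m*n. X $$ (i,j) = cnj (X $$ (j,i))"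
    using h hermitian_iff_entries[OF X] by blast
  have "(j div n)*n + i mod n < m*n" "(i div n)*n + j mod n < m*n"
    using ij by (simp_all add: index_pair_less index_div_less index_mod_less)
  moreover have "ptrans m n X $$ (i,j) = X $$ ((j div n)*n + i mod n, (i div n)*n + j mod n)"
    "ptrans m n X $$ (j,i) = X $$ ((i div n)*n + j mod n, (j div n)*n + i mod n)"
    unfolding ptrans_def using ij by simp_all
  ultimately show "ptrans m n X $$ (i,j) = cnj (ptrans m n X $$ (j,i))"
    using entries by metis
qed

lemma quad_form_ptrans_tensor:
  "quad_form (m*n) (ptrans m n M) (tensor_vec n a b)
   = quad_form (m*n) M (tensor_vec n (\<lambda>x. cnj (a x)) b)"
proof -
  have "quad_form (m*n) (ptrans m n M) (tensor_vec n a b) = (\<Sum>i1<m. \<Sum>i2<n. \<Sum>j1<m. \<Sum>j2<n.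
      cnj (cnj (a j1) * b i2) * M $$ (j1*n + i2, i1*n + j2) * (cnj (a i1) * b j2))"
    unfolding quad_form_def sum_lessThan_mult
    by (intro sum.cong refl) (simp add: index_ptrans_pair tensor_vec_def; simp add: ac_simps)
  also have "\<dots> = (\<Sum>i1<m. \<Sum>i2<n. \<Sum>j1<m. \<Sum>j2<n.
      cnj (cnj (a i1) * b i2) * M $$ (i1*n + i2, j1*n + j2) * (cnj (a j1) * b j2))"
    by (rule sum4_swap_first_third)
  also have "\<dots> = quad_form (m*n) M (tensor_vec n (\<lambda>x. cnj (a x)) b)"
    unfolding quad_form_def sum_lessThan_mult by (simp add: tensor_vec_def)
  finally show ?thesis .
qed

lemma EW_lproj_square:
  assumes E: "EW p n W"
  shows "\<exists>V \<in> carrier_mat p n. EW p p (lproj (1\<^sub>m p) V W)"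
proof -
  obtain f where W: "W \<in> carrier_mat (p*n) (p*n)" and h: "hermitian W"
    and BP: "block_positive p n W" and neg: "Re (quad_form (p*n) W f) < 0"
    using E unfolding EW_iff by blast
  define V where "V = mat p n (\<lambda>(c,y). cnj (f (c*n + y)))"
  define e where "e = (\<lambda>j. if j div p = j mod p then 1 else 0 :: complex)"
  have V: "V \<in> carrier_mat p n" unfolding V_def by simp
  have I: "1\<^sub>m p \<in> carrier_mat p p" by simp
  have "adj_apply (kron (1\<^sub>m p) V) e l = f l" if l: "l < p*n" for l
  proof -
    have idx: "l div n < p" "l mod n < n" using l by (simp_all add: index_div_less index_mod_less)
    have inner: "(\<Sum>j2<p. cnj (1\<^sub>m p $$ (j1, l div n)) * cnj (V $$ (j2, l mod n)) * e (j1*p + j2))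
        = (if j1 = l div n then cnj (V $$ (j1, l mod n)) else 0)" if j1: "j1 < p" for j1
    proof (cases "j1 = l div n")
      case True
      then have "(\<Sum>j2<p. cnj (1\<^sub>m p $$ (j1, l div n)) * cnj (V $$ (j2, l mod n)) * e (j1*p + j2))
          = (\<Sum>j2<p. if j2 = j1 then cnj (V $$ (j2, l mod n)) else 0)"
        using j1 by (intro sum.cong refl) (auto simp: e_def)
      then show ?thesis using True j1 by simp
    qed (use j1 idx in simp)
    have "adj_apply (kron (1\<^sub>m p) V) e l = (\<Sum>j1<p. if j1 = l div n then cnj (V $$ (j1, l mod n)) else 0)"
      unfolding adj_apply_kron[OF I V l] using inner by simp
    also have "\<dots> = f l" using idx by (simp add: V_def)
    finally show ?thesis .
  qed
  then have "quad_form (p*p) (lproj (1\<^sub>m p) V W) e = quad_form (p*n) W f"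
    unfolding lproj_def quad_form_congruence[OF kron_carrier[OF I V] W]
    by (rule quad_form_cong)
  then have "EW p p (lproj (1\<^sub>m p) V W)"
    unfolding EW_iff using lproj_carrier[OF I V W] hermitian_lproj[OF I V W h]
      block_positive_lproj[OF I V W BP] neg by metis
  then show ?thesis using V by blast
qed

lemma EW_ptrans_of_NPT:
  assumes P: "psd (m*n) \<rho>" and NPT: "\<not> PPT m n \<rho>"
  shows "EW m n (ptrans m n \<rho>)"
proof -
  have \<rho>: "\<rho> \<in> carrier_mat (m*n) (m*n)" "hermitian \<rho>"
    using P unfolding psd_iff_hermitian_nonneg by auto
  have "block_positive m n (ptrans m n \<rho>)"
    using P unfolding block_positive_def quad_form_ptrans_tensor psd_iff_hermitian_nonneg by blast
  moreover have "\<exists>f. Re (quad_form (m*n) (ptrans m n \<rho>) f) < 0"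
    using NPT ptrans_carrier hermitian_ptrans[OF \<rho>]
    unfolding PPT_def psd_iff_hermitian_nonneg by (auto simp: not_le)
  ultimately show ?thesis
    unfolding EW_iff using ptrans_carrier hermitian_ptrans[OF \<rho>] by blast
qed

lemma lproj_ptrans_not_EW:
  assumes und: "one_undistillable m n \<rho>" and \<rho>: "\<rho> \<in> carrier_mat (m*n) (m*n)"
    and U: "U \<in> carrier_mat 2 m" and V: "V \<in> carrier_mat n n"
  shows "\<not> EW 2 n (lproj U V (ptrans m n \<rho>))"
proof -
  have "PPT 2 n (lproj (map_mat cnj U) V \<rho>)"
    using und U V unfolding one_undistillable_def by simp
  then have "psd (2*n) (lproj U V (ptrans m n \<rho>))"
    unfolding PPT_def lproj_ptrans[OF U V \<rho>] .
  then show ?thesis by (rule psd_not_EW)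
qed

lemma decomposable_lproj:
  assumes D: "decomposable m n W" and U: "U \<in> carrier_mat p m" and V: "V \<in> carrier_mat q n"
  shows "decomposable p q (lproj U V W)"
proof -
  obtain X Y where X: "psd (m*n) X" and Y: "psd (m*n) Y" and W: "W = ptrans m n X + Y"
    using D unfolding decomposable_def by blast
  have U': "map_mat cnj U \<in> carrier_mat p m" using U by simp
  have "lproj U V W = ptrans p q (lproj (map_mat cnj U) V X) + lproj U V Y"
    using X Y unfolding W psd_iff_quad_form
    by (simp add: lproj_add[OF U V ptrans_carrier] lproj_ptrans[OF U V])
  then show ?thesis
    unfolding decomposable_def using psd_lproj[OF U' V X] psd_lproj[OF U V Y] by blast
qed

theorem lemma9:
  shows
   "(\<forall>(m::nat) (n::nat) W U V.
       EW m n W \<and> U \<in> carrier_mat 2 m \<and> V \<in> carrier_mat n n \<and> EW 2 n (lproj U V W) \<longrightarrow>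
       (\<exists>U2 \<in> carrier_mat 2 2. \<exists>V2 \<in> carrier_mat 2 n. EW 2 2 (lproj U2 V2 (lproj U V W))))
    \<and>
    (\<forall>(m::nat) (n::nat) \<rho>.
       state (m*n) \<rho> \<and> one_undistillable m n \<rho> \<and> \<not> PPT m n \<rho> \<longrightarrow>
       EW m n (ptrans m n \<rho>) \<and>
       \<not> (\<exists>U \<in> carrier_mat 2 m. \<exists>V \<in> carrier_mat n n. EW 2 n (lproj U V (ptrans m n \<rho>))))
    \<and>
    (\<forall>(m::nat) (n::nat) (p::nat) (q::nat) W U V.
       EW m n W \<and> U \<in> carrier_mat p m \<and> V \<in> carrier_mat q n \<and>
       EW p q (lproj U V W) \<and> \<not> decomposable p q (lproj U V W) \<and>
       (\<exists>\<rho>. entangled p q \<rho> \<and> PPT p q \<rho> \<and> detects (lproj U V W) \<rho>) \<longrightarrow>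
       \<not> decomposable m n W)"
proof (intro conjI allI impI)
  fix m n W U V
  assume "EW m n W \<and> U \<in> carrier_mat 2 m \<and> V \<in> carrier_mat n n \<and> EW 2 n (lproj U V W)"
  then show "\<exists>U2 \<in> carrier_mat 2 2. \<exists>V2 \<in> carrier_mat 2 n. EW 2 2 (lproj U2 V2 (lproj U V W))"
    using EW_lproj_square one_carrier_mat by blast
next
  fix m n \<rho>
  assume "state (m*n) \<rho> \<and> one_undistillable m n \<rho> \<and> \<not> PPT m n \<rho>"
  then have P: "psd (m*n) \<rho>" and und: "one_undistillable m n \<rho>" and NPT: "\<not> PPT m n \<rho>"
    unfolding state_def by auto
  show "EW m n (ptrans m n \<rho>)" by (rule EW_ptrans_of_NPT[OF P NPT])
  show "\<not> (\<exists>U \<in> carrier_mat 2 m. \<exists>V \<in> carrier_mat n n. EW 2 n (lproj U V (ptrans m n \<rho>)))"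
    using lproj_ptrans_not_EW[OF und] P unfolding psd_iff_quad_form by blast
next
  fix m n p q W U V
  assume "EW m n W \<and> U \<in> carrier_mat p m \<and> V \<in> carrier_mat q n \<and>
    EW p q (lproj U V W) \<and> \<not> decomposable p q (lproj U V W) \<and>
    (\<exists>\<rho>. entangled p q \<rho> \<and> PPT p q \<rho> \<and> detects (lproj U V W) \<rho>)"
  then show "\<not> decomposable m n W" using decomposable_lproj by blast
qed

end
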